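(* Let $n\ge 2$. The probability $p_n$ that two randomly generated (i.e. an unordered pair of distinct matrices chosen uniformly at random) $n^2\times n^2$ S-permutation matrices are disjoint is $$p_n=\frac{\xi_n}{(n!)^{2n}-1},\qquad\text{where}\qquad \xi_n=\sum_{\overline{A}\in\overline{\mathfrak{B}}_n,\ \varepsilon(\overline{A})\ge 2}(-1)^{\varepsilon(\overline{A})}\,|\overline{A}|\prod_{i=0}^{n-2}\left[(n-i)!\right]^{\psi_i(\overline{A})}.$$
   Context: An $n^2\times n^2$ S-permutation matrix is an $n^2\times n^2$ binary matrix which, when partitioned into $n^2$ non-intersecting consecutive $n\times n$ blocks, contains exactly one $1$ in each row, each column and each block; there are $(n!)^{2n}$ of them. Two binary matrices $(a_{ij}),(b_{ij})$ of equal size are disjoint if there are no $i,j$ with $a_{ij}=b_{ij}=1$. $\mathfrak{B}_n$ is the set of $n\times n$ binary matrices. For $A\in\mathfrak{B}_n$, $r_k(A)$ (resp. $c_k(A)$) is the number of rows (resp. columns) of $A$ with exactly $k$ ones, $\psi_k(A)=r_k(A)+c_k(A)$, and $\varepsilon(A)$ is the total number of ones of $A$. $A\sim B$ iff $B$ is obtained from $A$ by permuting rows; $\overline{A}$ is the equivalence class of $A$, $|\overline{A}|$ its cardinality, $\overline{\mathfrak{B}}_n=\mathfrak{B}_n/\!\sim$; $\psi_k,\varepsilon$ are defined on classes via any representative. *)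

theory Defs
  imports Complex_Main "HOL-Combinatorics.Permutations"
begin

(* Matrices are modelled as 0-indexed boolean functions, entry True = 1,
   required to be False outside the index range. *)

definition binmat :: "nat \<Rightarrow> (nat \<Rightarrow> nat \<Rightarrow> bool) set" where
  "binmat m = {M. \<forall>i j. M i j \<longrightarrow> i < m \<and> j < m}"

definition spm :: "nat \<Rightarrow> (nat \<Rightarrow> nat \<Rightarrow> bool) set" where
  "spm n = {M. M \<in> binmat (n^2)
     \<and> (\<forall>i<n^2. card {j. j < n^2 \<and> M i j} = 1)
     \<and> (\<forall>j<n^2. card {i. i < n^2 \<and> M i j} = 1)
     \<and> (\<forall>a<n. \<forall>b<n. card {(i,j). a*n \<le> i \<and> i < a*n + n \<and> b*n \<le> j \<and> j < b*n + n \<and> M i j} = 1)}"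

definition disjoint_mat :: "(nat \<Rightarrow> nat \<Rightarrow> bool) \<Rightarrow> (nat \<Rightarrow> nat \<Rightarrow> bool) \<Rightarrow> bool" where
  "disjoint_mat A B \<longleftrightarrow> \<not> (\<exists>i j. A i j \<and> B i j)"

definition spm_pairs :: "nat \<Rightarrow> (nat \<Rightarrow> nat \<Rightarrow> bool) set set" where
  "spm_pairs n = {P. P \<subseteq> spm n \<and> card P = 2}"

definition disjoint_spm_pairs :: "nat \<Rightarrow> (nat \<Rightarrow> nat \<Rightarrow> bool) set set" where
  "disjoint_spm_pairs n = {P \<in> spm_pairs n. \<forall>A\<in>P. \<forall>B\<in>P. A \<noteq> B \<longrightarrow> disjoint_mat A B}"

definition prob_disj :: "nat \<Rightarrow> real" where
  "prob_disj n = real (card (disjoint_spm_pairs n)) / real (card (spm_pairs n))"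

definition rk :: "nat \<Rightarrow> nat \<Rightarrow> (nat \<Rightarrow> nat \<Rightarrow> bool) \<Rightarrow> nat" where
  "rk n k A = card {i. i < n \<and> card {j. j < n \<and> A i j} = k}"

definition ck :: "nat \<Rightarrow> nat \<Rightarrow> (nat \<Rightarrow> nat \<Rightarrow> bool) \<Rightarrow> nat" where
  "ck n k A = card {j. j < n \<and> card {i. i < n \<and> A i j} = k}"

definition psi :: "nat \<Rightarrow> nat \<Rightarrow> (nat \<Rightarrow> nat \<Rightarrow> bool) \<Rightarrow> nat" where
  "psi n k A = rk n k A + ck n k A"

definition eps :: "nat \<Rightarrow> (nat \<Rightarrow> nat \<Rightarrow> bool) \<Rightarrow> nat" where
  "eps n A = card {(i,j). i < n \<and> j < n \<and> A i j}"

definition row_equiv :: "nat \<Rightarrow> ((nat \<Rightarrow> nat \<Rightarrow> bool) \<times> (nat \<Rightarrow> nat \<Rightarrow> bool)) set" where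
  "row_equiv n = {(A,B). A \<in> binmat n \<and> B \<in> binmat n \<and>
      (\<exists>\<sigma>. \<sigma> permutes {..<n} \<and> B = (\<lambda>i j. A (\<sigma> i) j))}"

definition classes :: "nat \<Rightarrow> (nat \<Rightarrow> nat \<Rightarrow> bool) set set" where
  "classes n = binmat n // row_equiv n"

definition rep :: "(nat \<Rightarrow> nat \<Rightarrow> bool) set \<Rightarrow> (nat \<Rightarrow> nat \<Rightarrow> bool)" where
  "rep X = (SOME A. A \<in> X)"

definition xi :: "nat \<Rightarrow> int" where
  "xi n = (\<Sum>X \<in> {X \<in> classes n. eps n (rep X) \<ge> 2}.
      (-1) ^ eps n (rep X) * int (card X) *
      (\<Prod>i\<in>{0..n-2}. int (fact (n - i)) ^ psi n i (rep X)))"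

end

theory Submission
  imports Defs
begin

text \<open>
  An S-permutation matrix is the same as two \<open>n\<close>-tuples of permutations of \<open>{0..<n}\<close>, one per
  block row fixing the row offsets of the ones and one per block column fixing their column
  offsets; hence there are \<open>(n!)\<^sup>2\<^sup>n\<close> of them, and two of them share a one exactly in the
  blocks where both offsets agree. For a fixed \<open>A\<close>, inclusion-exclusion over the set \<open>S\<close> of
  blocks where \<open>B\<close> agrees with \<open>A\<close> counts the \<open>B\<close> disjoint from \<open>A\<close>: the pairs agreeing on
  \<open>S\<close> number \<open>\<Prod>(n - r)! \<Prod>(n - c)!\<close> over the row and column counts of \<open>S\<close>, read as an
  \<open>n \<times> n\<close> binary matrix. The terms with \<open>|S| \<le> 1\<close> cancel and the others, grouped into
  row-permutation classes, add up to \<open>\<xi>\<^sub>n\<close>. So the disjointness graph is \<open>\<xi>\<^sub>n\<close>-regular on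
  \<open>N = (n!)\<^sup>2\<^sup>n\<close> vertices, and its edge density is \<open>\<xi>\<^sub>n / (N - 1)\<close>.
\<close>

lemma sum_Pow_minus_one_power_card:
  assumes "finite T"
  shows "(\<Sum>S\<in>Pow T. (-1::'a::ring_1) ^ card S) = (if T = {} then 1 else 0)"
proof (cases "T = {}")
  case False
  then have "card {S\<in>Pow T. even (card S)} = card {S\<in>Pow T. odd (card S)}"
    using card_subsupersets_even_odd[of T "{}"] assms by (simp add: Pow_def psubset_eq)
  then show ?thesis
    using sum_alternating_cancels[of "Pow T" card] assms False by simp
qed simp

lemma card_Collect_permutes:
  assumes "\<sigma> permutes S"
  shows "card {x\<in>S. P (\<sigma> x)} = card {x\<in>S. P x}"
  using bij_betw_same_card[OF bij_betw_Collect[OF permutes_imp_bij[OF assms], of P "\<lambda>x. P (\<sigma> x)"]] by simp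

lemma prod_eq_prod_power_card_fibres:
  fixes f :: "'b \<Rightarrow> 'a::comm_monoid_mult"
  assumes "finite A" "finite T" "c ` A \<subseteq> T"
  shows "(\<Prod>a\<in>A. f (c a)) = (\<Prod>k\<in>T. f k ^ card {a\<in>A. c a = k})"
proof -
  have "(\<Prod>a\<in>A. f (c a)) = (\<Prod>k\<in>T. \<Prod>a\<in>{a\<in>A. c a = k}. f (c a))"
    using prod.group[OF assms, of "\<lambda>a. f (c a)"] by simp
  also have "\<dots> = (\<Prod>k\<in>T. \<Prod>a\<in>{a\<in>A. c a = k}. f k)"
    by (intro prod.cong) auto
  also have "\<dots> = (\<Prod>k\<in>T. f k ^ card {a\<in>A. c a = k})"
    by simp
  finally show ?thesis .
qed

lemma int_card_avoiding_eq_sum_Pow: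
  fixes E :: "'x \<Rightarrow> 'u set"
  assumes "finite X" "finite U" "\<And>x. x \<in> X \<Longrightarrow> E x \<subseteq> U"
  shows "int (card {x\<in>X. E x = {}}) = (\<Sum>S\<in>Pow U. (-1) ^ card S * int (card {x\<in>X. S \<subseteq> E x}))"
proof -
  have "(\<Sum>S\<in>Pow U. (-1) ^ card S * int (card {x\<in>X. S \<subseteq> E x}))
      = (\<Sum>S\<in>Pow U. \<Sum>x\<in>X. if S \<subseteq> E x then (-1) ^ card S else 0)"
    using assms(1) by (simp add: sum.If_cases Int_def mult.commute)
  also have "\<dots> = (\<Sum>x\<in>X. \<Sum>S\<in>Pow U. if S \<subseteq> E x then (-1) ^ card S else 0)"
    by (rule sum.swap)
  also have "\<dots> = (\<Sum>x\<in>X. if E x = {} then 1 else 0)"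
  proof (rule sum.cong[OF refl])
    fix x assume "x \<in> X"
    then have "{S\<in>Pow U. S \<subseteq> E x} = Pow (E x)" "finite (E x)"
      using assms(2,3) finite_subset by blast+
    then show "(\<Sum>S\<in>Pow U. if S \<subseteq> E x then (-1) ^ card S else 0) = (if E x = {} then 1 else 0 :: int)"
      using sum.inter_filter[of "Pow U" "\<lambda>S. (-1::int) ^ card S" "\<lambda>S. S \<subseteq> E x"] assms(2)
      by (simp add: sum_Pow_minus_one_power_card)
  qed
  also have "\<dots> = int (card {x\<in>X. E x = {}})"
    using assms(1) by (simp add: sum.If_cases Int_def)
  finally show ?thesis ..
qed

lemma permutes_Diff_iff:
  assumes "K \<subseteq> S"
  shows "p permutes (S - K) \<longleftrightarrow> p permutes S \<and> (\<forall>x\<in>K. p x = x)"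
proof
  assume "p permutes (S - K)"
  then show "p permutes S \<and> (\<forall>x\<in>K. p x = x)"
    using permutes_subset[of p "S - K" S] permutes_not_in[of p "S - K"] by auto
next
  assume "p permutes S \<and> (\<forall>x\<in>K. p x = x)"
  then show "p permutes (S - K)"
    using permutes_not_in[of p S] unfolding permutes_def by (metis Diff_iff)
qed

lemma card_permutes_agreeing:
  assumes q: "q permutes S" and "finite S" "K \<subseteq> S"
  shows "card {p. p permutes S \<and> (\<forall>x\<in>K. p x = q x)} = fact (card S - card K)"
proof -
  have "bij_betw (\<lambda>p. inv q \<circ> p) {p. p permutes S \<and> (\<forall>x\<in>K. p x = q x)} {p. p permutes (S - K)}"
  proof (rule bij_betw_byWitness[where f'="\<lambda>p. q \<circ> p"])
    show "\<forall>p\<in>{p. p permutes S \<and> (\<forall>x\<in>K. p x = q x)}. q \<circ> (inv q \<circ> p) = p"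
      using permutes_inverses(1)[OF q] by (auto simp: fun_eq_iff)
    show "\<forall>p\<in>{p. p permutes (S - K)}. inv q \<circ> (q \<circ> p) = p"
      using permutes_inverses(2)[OF q] by (auto simp: fun_eq_iff)
    show "(\<lambda>p. inv q \<circ> p) ` {p. p permutes S \<and> (\<forall>x\<in>K. p x = q x)} \<subseteq> {p. p permutes (S - K)}"
      using permutes_compose[OF _ permutes_inv[OF q]] permutes_inverses(2)[OF q]
      by (auto simp: permutes_Diff_iff[OF assms(3)])
    show "(\<lambda>p. q \<circ> p) ` {p. p permutes (S - K)} \<subseteq> {p. p permutes S \<and> (\<forall>x\<in>K. p x = q x)}"
      using permutes_compose[OF _ q] by (auto simp: permutes_Diff_iff[OF assms(3)])
  qed
  then have "card {p. p permutes S \<and> (\<forall>x\<in>K. p x = q x)} = fact (card (S - K))"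
    using card_permutations[of "S - K"] assms(2) by (simp add: bij_betw_same_card)
  then show ?thesis
    using assms(2,3) by (simp add: card_Diff_subset finite_subset)
qed

lemma sum_eq_sum_quotient:
  fixes f :: "'a \<Rightarrow> 'b::comm_semiring_1"
  assumes r: "equiv A r" and "finite A" and f: "f respects r"
  shows "sum f A = (\<Sum>X\<in>A//r. of_nat (card X) * f (SOME x. x \<in> X))"
proof -
  have "sum f A = sum f (\<Union>(A//r))"
    by (simp add: Union_quotient[OF r])
  also have "\<dots> = (\<Sum>X\<in>A//r. sum f X)"
    using quotient_disj[OF r] in_quotient_imp_subset[OF r] finite_subset[OF _ \<open>finite A\<close>]
    by (subst sum.Union_disjoint) auto
  also have "\<dots> = (\<Sum>X\<in>A//r. of_nat (card X) * f (SOME x. x \<in> X))"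
  proof (rule sum.cong[OF refl])
    fix X assume X: "X \<in> A//r"
    have "(SOME x. x \<in> X) \<in> X"
      using in_quotient_imp_non_empty[OF r X] by (simp add: some_in_eq)
    then have "f x = f (SOME x. x \<in> X)" if "x \<in> X" for x
      using f in_quotient_imp_in_rel[OF r X] that by (auto simp: congruent_def)
    then show "sum f X = of_nat (card X) * f (SOME x. x \<in> X)"
      by simp
  qed
  finally show ?thesis .
qed

lemma card_related_pairs_eq_twice_card_edges:
  assumes "finite A" and Q: "symp Q" "\<And>x. x \<in> A \<Longrightarrow> \<not> Q x x"
  shows "card {(x,y). x \<in> A \<and> y \<in> A \<and> Q x y}
       = 2 * card {P. P \<subseteq> A \<and> card P = 2 \<and> (\<forall>x\<in>P. \<forall>y\<in>P. x \<noteq> y \<longrightarrow> Q x y)}"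
    (is "card ?pairs = 2 * card ?edges")
proof -
  have fin: "finite ?pairs" "finite ?edges"
    using finite_subset[of ?pairs "A \<times> A"] finite_subset[of ?edges "Pow A"] assms(1) by auto
  have "{x, y} \<in> ?edges" if "(x, y) \<in> ?pairs" for x y
  proof -
    have "x \<noteq> y" using that Q(2) by auto
    then show ?thesis using that Q(1) by (auto simp: symp_def)
  qed
  then have "(\<lambda>(x,y). {x,y}) ` ?pairs \<subseteq> ?edges"
    by auto
  then have "(\<Sum>P\<in>?edges. \<Sum>z\<in>{z\<in>?pairs. (\<lambda>(x,y). {x,y}) z = P}. 1) = (\<Sum>z\<in>?pairs. 1::nat)"
    by (rule sum.group[OF fin])
  then have "card ?pairs = (\<Sum>P\<in>?edges. card {z\<in>?pairs. (\<lambda>(x,y). {x,y}) z = P})"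
    by (simp only: card_eq_sum)
  also have "\<dots> = (\<Sum>P\<in>?edges. 2)"
  proof (rule sum.cong[OF refl])
    fix P assume P: "P \<in> ?edges"
    then obtain a b where ab: "P = {a,b}" "a \<noteq> b" by (auto simp: card_2_iff)
    moreover have "a \<in> A" "b \<in> A" "Q a b" "Q b a"
      using P ab by auto
    ultimately have "{z\<in>?pairs. (\<lambda>(x,y). {x,y}) z = P} = {(a,b), (b,a)}"
      by (auto simp: doubleton_eq_iff)
    then show "card {z\<in>?pairs. (\<lambda>(x,y). {x,y}) z = P} = 2"
      using ab by simp
  qed
  finally show ?thesis by simp
qed

lemma edge_density_of_regular_relation:
  assumes "finite A" "card A \<ge> 2" "symp Q" "\<And>x. x \<in> A \<Longrightarrow> \<not> Q x x"
    and deg: "\<And>x. x \<in> A \<Longrightarrow> card {y\<in>A. Q x y} = d"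
  shows "real (card {P. P \<subseteq> A \<and> card P = 2 \<and> (\<forall>x\<in>P. \<forall>y\<in>P. x \<noteq> y \<longrightarrow> Q x y)})
       / real (card {P. P \<subseteq> A \<and> card P = 2}) = real d / (real (card A) - 1)"
proof -
  define N where "N = card A"
  define E where "E = card {P. P \<subseteq> A \<and> card P = 2 \<and> (\<forall>x\<in>P. \<forall>y\<in>P. x \<noteq> y \<longrightarrow> Q x y)}"
  define D where "D = card {P. P \<subseteq> A \<and> card P = 2}"
  have "card {(x,y). x \<in> A \<and> y \<in> A \<and> Q x y} = card (SIGMA x:A. {y\<in>A. Q x y})"
    by (rule arg_cong[where f=card]) auto
  also have "\<dots> = N * d"
    using assms(1) deg by (simp add: card_SigmaI N_def)
  finally have "2 * E = N * d"
    unfolding E_def using card_related_pairs_eq_twice_card_edges[OF assms(1,3,4)] by simp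
  then have edges: "2 * real E = real N * real d"
    by (metis of_nat_mult of_nat_numeral)
  have "2 * D = N * (N - 1)"
    unfolding D_def N_def using n_subsets[OF assms(1), of 2]
    by (cases "even (card A)") (auto simp: choose_two)
  then have pairs: "2 * real D = real N * (real N - 1)"
    using assms(2) unfolding N_def by (metis of_nat_1 of_nat_diff of_nat_mult of_nat_numeral one_le_numeral order.trans)
  have N: "real N - 1 > 0"
    using assms(2) unfolding N_def by linarith
  then have "real N * (real N - 1) > 0"
    by simp
  then have "real D \<noteq> 0"
    using pairs by linarith
  moreover have "2 * (real E * (real N - 1)) = 2 * (real d * real D)"
    using edges pairs by algebra
  ultimately show ?thesis
    using N unfolding N_def[symmetric] E_def[symmetric] D_def[symmetric] by (simp add: frac_eq_eq)
qed

section \<open>S-permutation matrices as pairs of permutation tuples\<close>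

definition perm_tuples :: "nat \<Rightarrow> (nat \<Rightarrow> nat \<Rightarrow> nat) set" where
  "perm_tuples n = {..<n} \<rightarrow>\<^sub>E {p. p permutes {..<n}}"

text \<open>Block \<open>(a, b)\<close> of \<open>spm_of n R C\<close> has its one at row offset \<open>R a b\<close> and column offset
  \<open>C b a\<close>: \<open>R a\<close> permutes the blocks of block row \<open>a\<close> into row offsets, \<open>C b\<close> those of block
  column \<open>b\<close> into column offsets.\<close>

definition spm_of :: "nat \<Rightarrow> (nat \<Rightarrow> nat \<Rightarrow> nat) \<Rightarrow> (nat \<Rightarrow> nat \<Rightarrow> nat) \<Rightarrow> nat \<Rightarrow> nat \<Rightarrow> bool" where
  "spm_of n R C i j \<longleftrightarrow>
     i < n\<^sup>2 \<and> j < n\<^sup>2 \<and> R (i div n) (j div n) = i mod n \<and> C (j div n) (i div n) = j mod n"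

lemma block_index:
  fixes a r n :: nat
  assumes "a < n" "r < n"
  shows "a * n + r < n\<^sup>2" "(a * n + r) div n = a" "(a * n + r) mod n = r"
proof -
  have "a * n + r < (a + 1) * n" using assms by simp
  also have "\<dots> \<le> n * n" using assms by (intro mult_right_mono) auto
  finally show "a * n + r < n\<^sup>2" by (simp add: power2_eq_square)
  show "(a * n + r) div n = a" "(a * n + r) mod n = r" using assms by auto
qed

lemma less_square_cases:
  fixes i n :: nat
  assumes "i < n\<^sup>2"
  obtains a r where "a < n" "r < n" "i = a * n + r"
proof
  show "i div n < n" using assms by (simp add: power2_eq_square less_mult_imp_div_less)
  then show "i mod n < n" by simp
qed simp

lemma card_block:
  fixes a b n :: nat
  shows "card {(i,j). a*n \<le> i \<and> i < a*n + n \<and> b*n \<le> j \<and> j < b*n + n \<and> M i j}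
       = card {(r,c). r < n \<and> c < n \<and> M (a*n + r) (b*n + c)}"
proof -
  have "{(i,j). a*n \<le> i \<and> i < a*n + n \<and> b*n \<le> j \<and> j < b*n + n \<and> M i j}
      = (\<lambda>(r,c). (a*n + r, b*n + c)) ` {(r,c). r < n \<and> c < n \<and> M (a*n + r) (b*n + c)}"
  proof (intro subset_antisym subsetI)
    fix z assume "z \<in> {(i,j). a*n \<le> i \<and> i < a*n + n \<and> b*n \<le> j \<and> j < b*n + n \<and> M i j}"
    then show "z \<in> (\<lambda>(r,c). (a*n + r, b*n + c)) ` {(r,c). r < n \<and> c < n \<and> M (a*n + r) (b*n + c)}"
      by (auto intro!: image_eqI[of _ _ "(fst z - a*n, snd z - b*n)"])
  qed auto
  moreover have "inj_on (\<lambda>(r,c). (a*n + r, b*n + c)) A" for A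
    by (auto simp: inj_on_def)
  ultimately show ?thesis
    by (simp add: card_image)
qed

lemma perm_tuples_permutes: "R \<in> perm_tuples n \<Longrightarrow> a < n \<Longrightarrow> R a permutes {..<n}"
  unfolding perm_tuples_def by auto

lemma perm_tuples_less:
  assumes "R \<in> perm_tuples n" "a < n" "b < n"
  shows "R a b < n"
  using permutes_in_image[OF perm_tuples_permutes[OF assms(1,2)]] assms(3) by simp

lemma perm_tuples_eqI:
  assumes "R \<in> perm_tuples n" "R' \<in> perm_tuples n" "\<And>a b. a < n \<Longrightarrow> b < n \<Longrightarrow> R a b = R' a b"
  shows "R = R'"
proof (rule PiE_ext[OF assms(1,2)[unfolded perm_tuples_def]])
  fix a assume "a \<in> {..<n}"
  then have a: "a < n" by simp
  show "R a = R' a"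
  proof
    fix b
    show "R a b = R' a b"
      using assms(3)[OF a] permutes_not_in[OF perm_tuples_permutes[OF assms(1) a], of b]
        permutes_not_in[OF perm_tuples_permutes[OF assms(2) a], of b] by (cases "b < n") auto
  qed
qed

lemma spm_of_block:
  assumes "a < n" "b < n" "r < n" "c < n"
  shows "spm_of n R C (a * n + r) (b * n + c) \<longleftrightarrow> R a b = r \<and> C b a = c"
  using block_index[OF assms(1,3)] block_index[OF assms(2,4)] by (simp add: spm_of_def)

lemma spm_of_transpose: "spm_of n C R j i \<longleftrightarrow> spm_of n R C i j"
  unfolding spm_of_def by auto

lemma card_row_spm_of:
  assumes R: "R \<in> perm_tuples n" and C: "C \<in> perm_tuples n" and "i < n\<^sup>2"
  shows "card {j. j < n\<^sup>2 \<and> spm_of n R C i j} = 1"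
proof -
  obtain a r where ar: "a < n" "r < n" "i = a * n + r"
    using less_square_cases[OF \<open>i < n\<^sup>2\<close>] .
  obtain b where b: "b < n" "R a b = r"
    using permutes_image[OF perm_tuples_permutes[OF R ar(1)]] ar(2) by (metis imageE lessThan_iff)
  have c: "C b a < n"
    using perm_tuples_less[OF C b(1) ar(1)] .
  have "{j. j < n\<^sup>2 \<and> spm_of n R C i j} = {b * n + C b a}"
  proof safe
    fix j assume j: "j < n\<^sup>2" "spm_of n R C i j"
    obtain b' c where b'c: "b' < n" "c < n" "j = b' * n + c"
      using less_square_cases[OF j(1)] .
    have "R a b' = r" "C b' a = c"
      using j(2) spm_of_block[OF ar(1) b'c(1) ar(2) b'c(2)] ar b'c by auto
    moreover have "b' = b"
      using \<open>R a b' = r\<close> b permutes_inj[OF perm_tuples_permutes[OF R ar(1)]] by (metis injD)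
    ultimately show "j = b * n + C b a" using b'c by simp
  next
    show "b * n + C b a < n\<^sup>2"
      using block_index[OF b(1) c] by simp
    show "spm_of n R C i (b * n + C b a)"
      using spm_of_block[OF ar(1) b(1) ar(2) c] ar b by simp
  qed
  then show ?thesis by simp
qed

lemma card_block_spm_of:
  assumes R: "R \<in> perm_tuples n" and C: "C \<in> perm_tuples n" and "a < n" "b < n"
  shows "card {(r,c). r < n \<and> c < n \<and> spm_of n R C (a*n + r) (b*n + c)} = 1"
proof -
  have "{(r,c). r < n \<and> c < n \<and> spm_of n R C (a*n + r) (b*n + c)} = {(R a b, C b a)}"
    using assms perm_tuples_less[OF R] perm_tuples_less[OF C] by (auto simp: spm_of_block)
  then show ?thesis by simp
qed

lemma spm_of_in_spm:
  assumes "R \<in> perm_tuples n" "C \<in> perm_tuples n"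
  shows "spm_of n R C \<in> spm n"
proof -
  have "spm_of n R C \<in> binmat (n\<^sup>2)"
    unfolding binmat_def spm_of_def by simp
  moreover have "card {i. i < n\<^sup>2 \<and> spm_of n R C i j} = 1" if "j < n\<^sup>2" for j
    using card_row_spm_of[OF assms(2,1) that] by (simp only: spm_of_transpose)
  ultimately show ?thesis
    unfolding spm_def mem_Collect_eq card_block
    using card_row_spm_of[OF assms] card_block_spm_of[OF assms] by (intro conjI allI impI) simp_all
qed

lemma spm_of_inj:
  assumes "R \<in> perm_tuples n" "C \<in> perm_tuples n" "R' \<in> perm_tuples n" "C' \<in> perm_tuples n"
    and eq: "spm_of n R C = spm_of n R' C'"
  shows "R = R' \<and> C = C'"
proof -
  have "R' a b = R a b \<and> C' b a = C b a" if "a < n" "b < n" for a b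
  proof -
    note block = spm_of_block[OF that perm_tuples_less[OF assms(1) that] perm_tuples_less[OF assms(2) that(2,1)]]
    have "spm_of n R C (a * n + R a b) (b * n + C b a)"
      using block by simp
    then show ?thesis
      using block[of R' C'] eq by simp
  qed
  then show ?thesis
    using perm_tuples_eqI[OF assms(1,3)] perm_tuples_eqI[OF assms(2,4)] by metis
qed

lemma spm_row_unique:
  assumes M: "M \<in> spm n" and "M i j" "M i j'"
  shows "j = j'"
proof -
  have "i < n\<^sup>2" "j < n\<^sup>2" "j' < n\<^sup>2"
    using M assms(2,3) unfolding spm_def binmat_def by blast+
  moreover have "card {j. j < n\<^sup>2 \<and> M i j} = 1"
    using M \<open>i < n\<^sup>2\<close> unfolding spm_def by blast
  ultimately show ?thesis
    using assms(2,3) by (metis (mono_tags, lifting) card_1_singletonE mem_Collect_eq singletonD)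
qed

lemma spm_transpose:
  assumes M: "M \<in> spm n"
  shows "(\<lambda>i j. M j i) \<in> spm n"
proof -
  have "card {(r,c). r < n \<and> c < n \<and> M (b*n + c) (a*n + r)} = 1" if "a < n" "b < n" for a b
  proof -
    have "{(r,c). r < n \<and> c < n \<and> M (b*n + c) (a*n + r)}
        = prod.swap ` {(c,r). c < n \<and> r < n \<and> M (b*n + c) (a*n + r)}"
      by auto
    moreover have "card {(c,r). c < n \<and> r < n \<and> M (b*n + c) (a*n + r)} = 1"
      using M that unfolding spm_def card_block by blast
    ultimately show ?thesis
      by (simp add: card_image)
  qed
  moreover have "(\<lambda>i j. M j i) \<in> binmat (n\<^sup>2)"
    using M unfolding spm_def binmat_def by blast
  ultimately show ?thesis
    using M unfolding spm_def card_block by blast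
qed

lemma spm_block:
  assumes "M \<in> spm n" "a < n" "b < n"
  defines "X \<equiv> {(r,c). r < n \<and> c < n \<and> M (a*n + r) (b*n + c)}"
  shows "the_elem X \<in> X" and "\<And>rc. rc \<in> X \<Longrightarrow> rc = the_elem X"
proof -
  have "card X = 1"
    using assms unfolding spm_def card_block by blast
  then obtain x where "X = {x}"
    by (rule card_1_singletonE)
  then show "the_elem X \<in> X" "\<And>rc. rc \<in> X \<Longrightarrow> rc = the_elem X"
    by simp_all
qed

definition row_offsets :: "nat \<Rightarrow> (nat \<Rightarrow> nat \<Rightarrow> bool) \<Rightarrow> nat \<Rightarrow> nat \<Rightarrow> nat" where
  "row_offsets n M = (\<lambda>a\<in>{..<n}. \<lambda>b. if b < n
     then fst (the_elem {(r,c). r < n \<and> c < n \<and> M (a*n + r) (b*n + c)}) else b)"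

lemma row_offsets_eq:
  assumes "a < n" "b < n"
  shows "row_offsets n M a b = fst (the_elem {(r,c). r < n \<and> c < n \<and> M (a*n + r) (b*n + c)})"
  using assms unfolding row_offsets_def by simp

lemma row_offsets_eqI:
  assumes M: "M \<in> spm n" and "a < n" "b < n" "r < n" "c < n" "M (a*n + r) (b*n + c)"
  shows "row_offsets n M a b = r"
proof -
  have "(r,c) \<in> {(r,c). r < n \<and> c < n \<and> M (a*n + r) (b*n + c)}"
    using assms by simp
  then have "(r,c) = the_elem {(r,c). r < n \<and> c < n \<and> M (a*n + r) (b*n + c)}"
    by (rule spm_block(2)[OF M assms(2,3)])
  then show ?thesis
    using row_offsets_eq[OF assms(2,3), of M] by (metis fst_conv)
qed

lemma row_offsets_spec:
  assumes M: "M \<in> spm n" and "a < n" "b < n"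
  obtains c where "row_offsets n M a b < n" "c < n" "M (a*n + row_offsets n M a b) (b*n + c)"
proof -
  obtain r c where rc: "the_elem {(r,c). r < n \<and> c < n \<and> M (a*n + r) (b*n + c)} = (r,c)"
    by (cases "the_elem {(r,c). r < n \<and> c < n \<and> M (a*n + r) (b*n + c)}")
  then have "(r,c) \<in> {(r,c). r < n \<and> c < n \<and> M (a*n + r) (b*n + c)}"
    using spm_block(1)[OF assms] by simp
  moreover have "row_offsets n M a b = r"
    using row_offsets_eq[OF assms(2,3), of M] rc by simp
  ultimately show ?thesis
    using that by auto
qed

lemma row_offsets_in_perm_tuples:
  assumes M: "M \<in> spm n"
  shows "row_offsets n M \<in> perm_tuples n"
  unfolding perm_tuples_def
proof (rule PiE_I)
  fix a assume "a \<in> {..<n}"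
  then have a: "a < n" by simp
  have "inj_on (row_offsets n M a) {..<n}"
  proof (rule inj_onI)
    fix b b' assume b: "b \<in> {..<n}" "b' \<in> {..<n}" and eq: "row_offsets n M a b = row_offsets n M a b'"
    obtain c c' where "c < n" "M (a*n + row_offsets n M a b) (b*n + c)"
      and "c' < n" "M (a*n + row_offsets n M a b) (b'*n + c')"
      using row_offsets_spec[OF M a] b eq by (metis lessThan_iff)
    then have "b*n + c = b'*n + c'"
      using spm_row_unique[OF M] by blast
    then show "b = b'"
      using block_index(2)[of b n c] block_index(2)[of b' n c'] b \<open>c < n\<close> \<open>c' < n\<close> by simp
  qed
  moreover have "row_offsets n M a b < n" if "b < n" for b
    using row_offsets_spec[OF M a that] by blast
  moreover have "row_offsets n M a b = b" if "\<not> b < n" for b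
    using a that unfolding row_offsets_def by simp
  ultimately show "row_offsets n M a \<in> {p. p permutes {..<n}}"
    by (auto intro!: inj_imp_permutes)
next
  fix a assume "a \<notin> {..<n}"
  then show "row_offsets n M a = undefined"
    unfolding row_offsets_def by simp
qed

lemma spm_eq_spm_of_row_offsets:
  assumes M: "M \<in> spm n"
  shows "M = spm_of n (row_offsets n M) (row_offsets n (\<lambda>i j. M j i))"
proof (intro ext)
  fix i j
  have MT: "(\<lambda>i j. M j i) \<in> spm n"
    using spm_transpose[OF M] .
  show "M i j = spm_of n (row_offsets n M) (row_offsets n (\<lambda>i j. M j i)) i j"
  proof (cases "i < n\<^sup>2 \<and> j < n\<^sup>2")
    case True
    obtain a r where ar: "a < n" "r < n" "i = a*n + r"
      using less_square_cases True by blast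
    obtain b c where bc: "b < n" "c < n" "j = b*n + c"
      using less_square_cases True by blast
    have "M (a*n + r) (b*n + c) \<longleftrightarrow> row_offsets n M a b = r \<and> row_offsets n (\<lambda>i j. M j i) b a = c"
    proof
      assume "M (a*n + r) (b*n + c)"
      then show "row_offsets n M a b = r \<and> row_offsets n (\<lambda>i j. M j i) b a = c"
        using row_offsets_eqI[OF M ar(1) bc(1) ar(2) bc(2)] row_offsets_eqI[OF MT bc(1) ar(1) bc(2) ar(2)]
        by blast
    next
      assume eq: "row_offsets n M a b = r \<and> row_offsets n (\<lambda>i j. M j i) b a = c"
      obtain c' where c': "c' < n" "M (a*n + r) (b*n + c')"
        using row_offsets_spec[OF M ar(1) bc(1)] eq by blast
      then have "row_offsets n (\<lambda>i j. M j i) b a = c'"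
        using row_offsets_eqI[OF MT bc(1) ar(1) c'(1) ar(2)] by blast
      then show "M (a*n + r) (b*n + c)"
        using eq c' by blast
    qed
    then show ?thesis
      using spm_of_block[OF ar(1) bc(1) ar(2) bc(2)] ar(3) bc(3) by blast
  next
    case False
    then show ?thesis
      using M unfolding spm_def binmat_def spm_of_def by blast
  qed
qed

lemma bij_betw_spm_of: "bij_betw (\<lambda>(R,C). spm_of n R C) (perm_tuples n \<times> perm_tuples n) (spm n)"
proof (rule bij_betw_imageI)
  show "inj_on (\<lambda>(R,C). spm_of n R C) (perm_tuples n \<times> perm_tuples n)"
    by (auto simp: inj_on_def dest: spm_of_inj)
  have "M \<in> (\<lambda>(R,C). spm_of n R C) ` (perm_tuples n \<times> perm_tuples n)" if "M \<in> spm n" for M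
  proof (rule image_eqI)
    show "M = (\<lambda>(R,C). spm_of n R C) (row_offsets n M, row_offsets n (\<lambda>i j. M j i))"
      unfolding prod.case by (rule spm_eq_spm_of_row_offsets[OF that])
    show "(row_offsets n M, row_offsets n (\<lambda>i j. M j i)) \<in> perm_tuples n \<times> perm_tuples n"
      using row_offsets_in_perm_tuples that spm_transpose by blast
  qed
  then show "(\<lambda>(R,C). spm_of n R C) ` (perm_tuples n \<times> perm_tuples n) = spm n"
    using spm_of_in_spm by (intro subset_antisym subsetI) auto
qed

lemma card_perm_tuples: "card (perm_tuples n) = fact n ^ n"
  unfolding perm_tuples_def by (simp add: card_PiE card_permutations)

lemma finite_perm_tuples: "finite (perm_tuples n)"
  unfolding perm_tuples_def by (simp add: finite_PiE finite_permutations)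

lemma card_spm: "card (spm n) = fact n ^ (2 * n)"
  using bij_betw_same_card[OF bij_betw_spm_of[of n]]
  by (simp add: card_cartesian_product card_perm_tuples power_mult power2_eq_square[symmetric] mult.commute)

lemma finite_spm: "finite (spm n)"
  using bij_betw_finite[OF bij_betw_spm_of[of n]] finite_perm_tuples by simp

section \<open>Matrices disjoint from a fixed one\<close>

lemma disjoint_spm_of_iff:
  assumes "R \<in> perm_tuples n" "C \<in> perm_tuples n"
  shows "disjoint_mat (spm_of n R0 C0) (spm_of n R C)
     \<longleftrightarrow> (\<forall>a<n. \<forall>b<n. \<not> (R a b = R0 a b \<and> C b a = C0 b a))"
proof
  assume disj: "disjoint_mat (spm_of n R0 C0) (spm_of n R C)"
  show "\<forall>a<n. \<forall>b<n. \<not> (R a b = R0 a b \<and> C b a = C0 b a)"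
  proof (intro allI impI notI)
    fix a b assume ab: "a < n" "b < n" and agree: "R a b = R0 a b \<and> C b a = C0 b a"
    note block = spm_of_block[OF ab perm_tuples_less[OF assms(1) ab] perm_tuples_less[OF assms(2) ab(2,1)]]
    have "spm_of n R C (a*n + R a b) (b*n + C b a)" "spm_of n R0 C0 (a*n + R a b) (b*n + C b a)"
      using block[of R C] block[of R0 C0] agree by simp_all
    then show False
      using disj unfolding disjoint_mat_def by blast
  qed
next
  assume "\<forall>a<n. \<forall>b<n. \<not> (R a b = R0 a b \<and> C b a = C0 b a)"
  moreover have "i div n < n" "j div n < n" if "i < n\<^sup>2" "j < n\<^sup>2" for i j
    using that by (simp_all add: power2_eq_square less_mult_imp_div_less)
  ultimately show "disjoint_mat (spm_of n R0 C0) (spm_of n R C)"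
    unfolding disjoint_mat_def spm_of_def by metis
qed

lemma card_perm_tuples_agreeing:
  assumes "Q \<in> perm_tuples n"
  shows "card {R\<in>perm_tuples n. \<forall>a<n. \<forall>b<n. M a b \<longrightarrow> R a b = Q a b}
       = (\<Prod>a<n. fact (n - card {b. b < n \<and> M a b}))"
proof -
  have "{R\<in>perm_tuples n. \<forall>a<n. \<forall>b<n. M a b \<longrightarrow> R a b = Q a b}
      = (\<Pi>\<^sub>E a\<in>{..<n}. {p. p permutes {..<n} \<and> (\<forall>b\<in>{b. b < n \<and> M a b}. p b = Q a b)})"
    unfolding perm_tuples_def by (auto simp: PiE_def Pi_def)
  then have "card {R\<in>perm_tuples n. \<forall>a<n. \<forall>b<n. M a b \<longrightarrow> R a b = Q a b}
      = (\<Prod>a<n. card {p. p permutes {..<n} \<and> (\<forall>b\<in>{b. b < n \<and> M a b}. p b = Q a b)})"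
    by (simp add: card_PiE)
  also have "\<dots> = (\<Prod>a<n. fact (n - card {b. b < n \<and> M a b}))"
    by (intro prod.cong refl, subst card_permutes_agreeing)
      (use perm_tuples_permutes[OF assms] in auto)
  finally show ?thesis .
qed

definition agree_count :: "nat \<Rightarrow> (nat \<Rightarrow> nat \<Rightarrow> bool) \<Rightarrow> nat" where
  "agree_count n M = (\<Prod>i<n. fact (n - card {j. j < n \<and> M i j})) * (\<Prod>j<n. fact (n - card {i. i < n \<and> M i j}))"

lemma card_pairs_agreeing:
  assumes "R0 \<in> perm_tuples n" "C0 \<in> perm_tuples n"
  shows "card {(R,C)\<in>perm_tuples n \<times> perm_tuples n. \<forall>a<n. \<forall>b<n. M a b \<longrightarrow> R a b = R0 a b \<and> C b a = C0 b a}
       = agree_count n M"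
proof -
  have "{(R,C)\<in>perm_tuples n \<times> perm_tuples n. \<forall>a<n. \<forall>b<n. M a b \<longrightarrow> R a b = R0 a b \<and> C b a = C0 b a}
      = {R\<in>perm_tuples n. \<forall>a<n. \<forall>b<n. M a b \<longrightarrow> R a b = R0 a b}
        \<times> {C\<in>perm_tuples n. \<forall>b<n. \<forall>a<n. M a b \<longrightarrow> C b a = C0 b a}"
    by auto
  then show ?thesis
    using card_perm_tuples_agreeing[OF assms(1), of M] card_perm_tuples_agreeing[OF assms(2), of "\<lambda>j i. M i j"]
    unfolding agree_count_def by (simp add: card_cartesian_product)
qed

lemma int_card_spm_disjoint:
  assumes "A \<in> spm n"
  shows "int (card {B\<in>spm n. disjoint_mat A B})
       = (\<Sum>S\<in>Pow ({..<n} \<times> {..<n}). (-1) ^ card S * int (agree_count n (\<lambda>i j. (i,j) \<in> S)))"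
proof -
  let ?U = "{..<n} \<times> {..<n}" and ?T = "perm_tuples n \<times> perm_tuples n"
  obtain R0 C0 where RC0: "R0 \<in> perm_tuples n" "C0 \<in> perm_tuples n" and A: "A = spm_of n R0 C0"
    using assms bij_betw_imp_surj_on[OF bij_betw_spm_of[of n]] by (force simp: image_iff)
  define E where "E = (\<lambda>(R,C). {(a,b)\<in>?U. R a b = R0 a b \<and> C b a = C0 b a})"
  have "disjoint_mat A ((\<lambda>(R,C). spm_of n R C) x) \<longleftrightarrow> E x = {}" if "x \<in> ?T" for x
    using that disjoint_spm_of_iff unfolding A E_def by (auto split: prod.splits)
  then have "bij_betw (\<lambda>(R,C). spm_of n R C) {x\<in>?T. E x = {}} {B\<in>spm n. disjoint_mat A B}"
    by (intro bij_betw_Collect[OF bij_betw_spm_of]) auto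
  then have "int (card {B\<in>spm n. disjoint_mat A B}) = int (card {x\<in>?T. E x = {}})"
    by (simp add: bij_betw_same_card)
  also have "\<dots> = (\<Sum>S\<in>Pow ?U. (-1) ^ card S * int (card {x\<in>?T. S \<subseteq> E x}))"
    by (rule int_card_avoiding_eq_sum_Pow) (auto simp: finite_perm_tuples E_def)
  also have "\<dots> = (\<Sum>S\<in>Pow ?U. (-1) ^ card S * int (agree_count n (\<lambda>i j. (i,j) \<in> S)))"
  proof (intro sum.cong refl)
    fix S assume "S \<in> Pow ?U"
    then have "{x\<in>?T. S \<subseteq> E x}
        = {(R,C)\<in>?T. \<forall>a<n. \<forall>b<n. (a,b) \<in> S \<longrightarrow> R a b = R0 a b \<and> C b a = C0 b a}"
      unfolding E_def by auto
    then show "(-1) ^ card S * int (card {x\<in>?T. S \<subseteq> E x})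
        = (-1) ^ card S * int (agree_count n (\<lambda>i j. (i,j) \<in> S))"
      using card_pairs_agreeing[OF RC0, of "\<lambda>i j. (i,j) \<in> S"] by simp
  qed
  finally show ?thesis .
qed

lemma prod_fact_diff_indicator:
  assumes "a < n"
  shows "n * (\<Prod>i<n. fact (n - (if i = a then 1 else 0))) = (fact n ^ n :: nat)"
proof -
  have "fact n = (if i = a then n else 1) * fact (n - (if i = a then 1 else 0))" for i
    using assms fact_reduce[of n, where 'a=nat] by simp
  then have "(\<Prod>i<n. fact n :: nat) = (\<Prod>i<n. (if i = a then n else 1) * fact (n - (if i = a then 1 else 0)))"
    by (intro prod.cong refl)
  also have "\<dots> = (\<Prod>i<n. if i = a then n else 1) * (\<Prod>i<n. fact (n - (if i = a then 1 else 0)))"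
    by (rule prod.distrib)
  also have "(\<Prod>i<n. if i = a then n else 1) = n"
    using assms by (simp add: prod.delta)
  finally show ?thesis
    by simp
qed

lemma agree_count_singleton:
  assumes "a < n" "b < n"
  shows "n\<^sup>2 * agree_count n (\<lambda>i j. i = a \<and> j = b) = agree_count n (\<lambda>i j. False)"
proof -
  have "card {j. j < n \<and> i = a \<and> j = b} = (if i = a then 1 else 0)"
    and "card {i. i < n \<and> i = a \<and> j = b} = (if j = b then 1 else 0)" for i j
    using assms by (auto simp: Collect_conv_if)
  then have "n\<^sup>2 * agree_count n (\<lambda>i j. i = a \<and> j = b)
      = (n * (\<Prod>i<n. fact (n - (if i = a then 1 else 0)))) * (n * (\<Prod>j<n. fact (n - (if j = b then 1 else 0))))"
    unfolding agree_count_def power2_eq_square by (simp add: mult_ac)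
  also have "\<dots> = fact n ^ n * fact n ^ n"
    unfolding prod_fact_diff_indicator[OF assms(1)] prod_fact_diff_indicator[OF assms(2)] ..
  also have "\<dots> = agree_count n (\<lambda>i j. False)"
    unfolding agree_count_def by simp
  finally show ?thesis .
qed

lemma sum_singletons_agree_count:
  assumes "n \<ge> 1"
  shows "(\<Sum>u\<in>{..<n} \<times> {..<n}. agree_count n (\<lambda>i j. (i,j) = u)) = agree_count n (\<lambda>i j. False)"
proof -
  have "n\<^sup>2 * (\<Sum>u\<in>{..<n} \<times> {..<n}. agree_count n (\<lambda>i j. (i,j) = u))
      = (\<Sum>u\<in>{..<n} \<times> {..<n}. agree_count n (\<lambda>i j. False))"
    unfolding sum_distrib_left by (intro sum.cong refl) (auto simp: agree_count_singleton)
  also have "\<dots> = n\<^sup>2 * agree_count n (\<lambda>i j. False)"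
    by (simp add: card_cartesian_product power2_eq_square)
  finally show ?thesis
    using assms by simp
qed

lemma sum_small_subsets_agree_count:
  assumes "n \<ge> 1"
  shows "(\<Sum>S\<in>{S\<in>Pow ({..<n} \<times> {..<n}). card S < 2}. (-1) ^ card S * int (agree_count n (\<lambda>i j. (i,j) \<in> S))) = 0"
proof -
  let ?U = "{..<n} \<times> {..<n}"
  have "{S\<in>Pow ?U. card S < 2} = insert {} ((\<lambda>u. {u}) ` ?U)"
  proof (intro subset_antisym subsetI)
    fix S assume "S \<in> {S\<in>Pow ?U. card S < 2}"
    moreover from this have "finite S"
      by (auto intro: finite_subset)
    ultimately show "S \<in> insert {} ((\<lambda>u. {u}) ` ?U)"
      by (auto simp: less_2_cases_iff card_1_singleton_iff)
  qed auto
  then have "(\<Sum>S\<in>{S\<in>Pow ?U. card S < 2}. (-1) ^ card S * int (agree_count n (\<lambda>i j. (i,j) \<in> S)))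
      = int (agree_count n (\<lambda>i j. (i,j) \<in> {}))
        + (\<Sum>S\<in>(\<lambda>u. {u}) ` ?U. (-1) ^ card S * int (agree_count n (\<lambda>i j. (i,j) \<in> S)))"
    unfolding \<open>{S\<in>Pow ?U. card S < 2} = insert {} ((\<lambda>u. {u}) ` ?U)\<close> by (subst sum.insert) auto
  also have "(\<Sum>S\<in>(\<lambda>u. {u}) ` ?U. (-1) ^ card S * int (agree_count n (\<lambda>i j. (i,j) \<in> S)))
      = - (\<Sum>u\<in>?U. int (agree_count n (\<lambda>i j. (i,j) = u)))"
    by (subst sum.reindex) (auto simp: inj_on_def sum_negf)
  also have "(\<Sum>u\<in>?U. int (agree_count n (\<lambda>i j. (i,j) = u))) = int (agree_count n (\<lambda>i j. False))"
    using sum_singletons_agree_count[OF assms] by (metis of_nat_sum)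
  finally show ?thesis
    by simp
qed

lemma prod_fact_row_counts:
  "(\<Prod>i<n. fact (n - card {j. j < n \<and> M i j})) = (\<Prod>k\<in>{0..n}. fact (n - k) ^ rk n k M :: nat)"
proof -
  have "card {j. j < n \<and> M i j} \<le> n" for i
    using card_mono[of "{..<n}" "{j. j < n \<and> M i j}"] by auto
  then have "(\<Prod>i<n. fact (n - card {j. j < n \<and> M i j}))
      = (\<Prod>k\<in>{0..n}. fact (n - k) ^ card {i\<in>{..<n}. card {j. j < n \<and> M i j} = k})"
    by (intro prod_eq_prod_power_card_fibres) auto
  then show ?thesis
    unfolding rk_def by simp
qed

lemma agree_count_eq_prod_psi: "agree_count n M = (\<Prod>k\<in>{0..n-2}. fact (n - k) ^ psi n k M)"
proof -
  have "agree_count n M = (\<Prod>k\<in>{0..n}. fact (n - k) ^ rk n k M) * (\<Prod>k\<in>{0..n}. fact (n - k) ^ ck n k M)"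
    using prod_fact_row_counts[of n M] prod_fact_row_counts[of n "\<lambda>j i. M i j"]
    unfolding agree_count_def ck_def rk_def by (simp only:)
  also have "\<dots> = (\<Prod>k\<in>{0..n}. fact (n - k) ^ psi n k M)"
    unfolding psi_def power_add prod.distrib ..
  also have "\<dots> = (\<Prod>k\<in>{0..n-2}. fact (n - k) ^ psi n k M)"
  proof (rule prod.mono_neutral_right)
    show "\<forall>k\<in>{0..n} - {0..n-2}. fact (n - k) ^ psi n k M = (1::nat)"
    proof
      fix k assume "k \<in> {0..n} - {0..n-2}"
      then have "n - k = 0 \<or> n - k = 1"
        by auto
      then show "fact (n - k) ^ psi n k M = (1::nat)"
        by auto
    qed
  qed auto
  finally show ?thesis .
qed

section \<open>Summing over row-permutation classes\<close>

lemma eps_eq_sum_rows: "eps n A = (\<Sum>i<n. card {j. j < n \<and> A i j})"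
proof -
  have "{(i,j). i < n \<and> j < n \<and> A i j} = (SIGMA i:{..<n}. {j. j < n \<and> A i j})"
    by auto
  then show ?thesis
    unfolding eps_def by (simp add: card_SigmaI)
qed

lemma row_equiv_invariants:
  assumes "(A, B) \<in> row_equiv n"
  shows "eps n B = eps n A" and "psi n k B = psi n k A"
proof -
  obtain \<sigma> where \<sigma>: "\<sigma> permutes {..<n}" and B: "B = (\<lambda>i j. A (\<sigma> i) j)"
    using assms unfolding row_equiv_def by auto
  show "eps n B = eps n A"
    unfolding eps_eq_sum_rows B using sum.permute[OF \<sigma>, of "\<lambda>i. card {j. j < n \<and> A i j}"]
    by (simp add: comp_def)
  have "rk n k B = rk n k A"
    unfolding rk_def B using card_Collect_permutes[OF \<sigma>, of "\<lambda>i. card {j. j < n \<and> A i j} = k"] by simp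
  moreover have "card {i. i < n \<and> A (\<sigma> i) j} = card {i. i < n \<and> A i j}" for j
    using card_Collect_permutes[OF \<sigma>, of "\<lambda>i. A i j"] by simp
  then have "ck n k B = ck n k A"
    unfolding ck_def B by simp
  ultimately show "psi n k B = psi n k A"
    unfolding psi_def by simp
qed

lemma equiv_row_equiv: "equiv (binmat n) (row_equiv n)"
proof (rule equivI)
  show "row_equiv n \<subseteq> binmat n \<times> binmat n"
    unfolding row_equiv_def by auto
  show "refl_on (binmat n) (row_equiv n)"
    unfolding refl_on_def row_equiv_def using permutes_id by fastforce
  show "sym (row_equiv n)"
  proof (rule symI)
    fix A B assume "(A, B) \<in> row_equiv n"
    then obtain \<sigma> where \<sigma>: "\<sigma> permutes {..<n}" and B: "B = (\<lambda>i j. A (\<sigma> i) j)"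
      and AB: "A \<in> binmat n" "B \<in> binmat n"
      unfolding row_equiv_def by auto
    have "A = (\<lambda>i j. B (inv \<sigma> i) j)"
      using B permutes_inverses(1)[OF \<sigma>] by simp
    then show "(B, A) \<in> row_equiv n"
      unfolding row_equiv_def using AB permutes_inv[OF \<sigma>] by blast
  qed
  show "trans (row_equiv n)"
  proof (rule transI)
    fix A B C assume "(A, B) \<in> row_equiv n" "(B, C) \<in> row_equiv n"
    then obtain \<sigma> \<tau> where "\<sigma> permutes {..<n}" "\<tau> permutes {..<n}"
      and "B = (\<lambda>i j. A (\<sigma> i) j)" "C = (\<lambda>i j. B (\<tau> i) j)" "A \<in> binmat n" "C \<in> binmat n"
      unfolding row_equiv_def by auto
    then show "(A, C) \<in> row_equiv n"
      unfolding row_equiv_def using permutes_compose[of \<tau> "{..<n}" \<sigma>] by (auto intro!: exI[of _ "\<sigma> \<circ> \<tau>"])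
  qed
qed

lemma bij_betw_Pow_binmat: "bij_betw (\<lambda>S i j. (i,j) \<in> S) (Pow ({..<n} \<times> {..<n})) (binmat n)"
  by (rule bij_betw_byWitness[where f'="\<lambda>M. {(i,j). M i j}"]) (auto simp: binmat_def)

lemma eps_of_set:
  assumes "S \<subseteq> {..<n} \<times> {..<n}"
  shows "eps n (\<lambda>i j. (i,j) \<in> S) = card S"
proof -
  have "{(i,j). i < n \<and> j < n \<and> (i,j) \<in> S} = S"
    using assms by auto
  then show ?thesis
    unfolding eps_def by simp
qed

definition xi_weight :: "nat \<Rightarrow> (nat \<Rightarrow> nat \<Rightarrow> bool) \<Rightarrow> int" where
  "xi_weight n M = (-1) ^ eps n M * (\<Prod>i\<in>{0..n-2}. int (fact (n - i)) ^ psi n i M)"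

lemma sum_xi_weight_eq_xi: "(\<Sum>M\<in>{M\<in>binmat n. 2 \<le> eps n M}. xi_weight n M) = xi n"
proof -
  let ?w = "\<lambda>M. if 2 \<le> eps n M then xi_weight n M else 0"
  have fin: "finite (binmat n)"
    using bij_betw_finite[OF bij_betw_Pow_binmat] by simp
  have "?w respects row_equiv n"
    using row_equiv_invariants unfolding congruent_def xi_weight_def by auto
  then have "sum ?w (binmat n) = (\<Sum>X\<in>classes n. int (card X) * ?w (rep X))"
    unfolding classes_def rep_def by (rule sum_eq_sum_quotient[OF equiv_row_equiv fin])
  also have "\<dots> = (\<Sum>X\<in>classes n. if 2 \<le> eps n (rep X) then int (card X) * xi_weight n (rep X) else 0)"
    by (intro sum.cong refl) simp
  also have "\<dots> = xi n"
    unfolding xi_def xi_weight_def classes_def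
    by (subst sum.inter_filter[OF finite_quotient[OF fin equiv_type[OF equiv_row_equiv]]])
      (intro sum.cong refl, simp only: mult_ac)
  finally show ?thesis
    using fin by (simp add: sum.inter_filter)
qed

lemma card_spm_disjoint_eq_xi:
  assumes "n \<ge> 2" "A \<in> spm n"
  shows "int (card {B\<in>spm n. disjoint_mat A B}) = xi n"
proof -
  let ?U = "{..<n} \<times> {..<n}"
  let ?g = "\<lambda>S. (-1) ^ card S * int (agree_count n (\<lambda>i j. (i,j) \<in> S))"
  have "sum ?g (Pow ?U) = sum ?g {S\<in>Pow ?U. card S < 2} + sum ?g {S\<in>Pow ?U. 2 \<le> card S}"
    by (rule sum_Un_eq[symmetric]) auto
  also have "sum ?g {S\<in>Pow ?U. card S < 2} = 0"
    using sum_small_subsets_agree_count assms(1) by simp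
  also have "sum ?g {S\<in>Pow ?U. 2 \<le> card S} = (\<Sum>S\<in>{S\<in>Pow ?U. 2 \<le> card S}. xi_weight n (\<lambda>i j. (i,j) \<in> S))"
    unfolding xi_weight_def agree_count_eq_prod_psi by (intro sum.cong refl) (simp add: eps_of_set)
  also have "\<dots> = (\<Sum>M\<in>{M\<in>binmat n. 2 \<le> eps n M}. xi_weight n M)"
    by (rule sum.reindex_bij_betw, rule bij_betw_Collect[OF bij_betw_Pow_binmat]) (simp add: eps_of_set)
  finally show ?thesis
    using int_card_spm_disjoint[OF assms(2)] sum_xi_weight_eq_xi by simp
qed

lemma spm_not_disjoint_self:
  assumes "n \<ge> 1" "A \<in> spm n"
  shows "\<not> disjoint_mat A A"
proof -
  have "card {j. j < n\<^sup>2 \<and> A 0 j} = 1"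
    using assms unfolding spm_def by simp
  then obtain j where "A 0 j"
    by (metis (mono_tags, lifting) card_1_singletonE mem_Collect_eq singletonI)
  then show ?thesis
    unfolding disjoint_mat_def by blast
qed

lemma symp_disjoint_mat: "symp disjoint_mat"
  unfolding disjoint_mat_def symp_def by blast

lemma two_le_card_spm:
  assumes "n \<ge> 2"
  shows "2 \<le> card (spm n)"
proof -
  have "n \<le> fact n"
    by (rule fact_ge_self)
  also have "fact n \<le> (fact n ^ (2 * n) :: nat)"
    using assms by (intro self_le_power) (simp_all add: fact_ge_1)
  finally show ?thesis
    unfolding card_spm using assms by linarith
qed

theorem mainTheorem7:
  fixes n :: nat
  assumes "n \<ge> 2"
  shows "prob_disj n = real_of_int (xi n) / (real (fact n ^ (2*n)) - 1)"
proof -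
  obtain A0 where "A0 \<in> spm n"
    using two_le_card_spm[OF assms] by fastforce
  define d where "d = card {B\<in>spm n. disjoint_mat A0 B}"
  have xi: "xi n = int d"
    unfolding d_def using card_spm_disjoint_eq_xi[OF assms \<open>A0 \<in> spm n\<close>] by simp
  have "card {B\<in>spm n. disjoint_mat A B} = d" if "A \<in> spm n" for A
    using card_spm_disjoint_eq_xi[OF assms that] xi by simp
  moreover have "\<not> disjoint_mat A A" if "A \<in> spm n" for A
    using assms that by (intro spm_not_disjoint_self) simp_all
  ultimately have "prob_disj n = real d / (real (card (spm n)) - 1)"
    unfolding prob_disj_def disjoint_spm_pairs_def spm_pairs_def
    using edge_density_of_regular_relation[OF finite_spm two_le_card_spm[OF assms] symp_disjoint_mat]
    by simp
  then show ?thesis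
    using xi card_spm by simp
qed

end
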